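(* Let $m \ge 2$ and $n \ge 2m$ be integers. Then for every real $r$ with $|r|<1$, $$\int_{-1}^1 \frac{U_n(s)(1-s^2)^{m-\frac{1}{2}}}{(s-r)^3}\,ds = (-1)^{m}\left(\frac{1}{2}\right)^{2m}\frac{\pi}{1-r^2}\sum_{j=0}^{2m-2}(-1)^j\binom{2m-2}{j}(n+3-2m+2j)\Big[(n+4-2m+2j)U_{n+1-2m+2j}(r)-(n+2-2m+2j)U_{n+3-2m+2j}(r)\Big],$$ where the integral is a Hadamard finite-part integral.
   Context: $U_k(s)=\frac{\sin((k+1)\cos^{-1}s)}{\sin(\cos^{-1}s)}$ is the Tchebyshev polynomial of the second kind. For a positive integer $\alpha\ge 2$ and $|r|<1$, the integral $\int_{-1}^1 \frac{D(s)}{(s-r)^\alpha}ds$ is understood in the Hadamard finite-part sense; in particular it satisfies $\int_{-1}^1 \frac{D(s)}{(s-r)^{\alpha}}ds=\frac{1}{\alpha-1}\frac{d}{dr}\int_{-1}^1\frac{D(s)}{(s-r)^{\alpha-1}}ds$, where for $\alpha-1=1$ the right-hand integral is a Cauchy principal value. $\binom{a}{j}=\frac{a!}{j!(a-j)!}$. *)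

theory Defs
  imports "HOL-Analysis.Analysis"
begin

definition chebU :: "nat \<Rightarrow> real \<Rightarrow> real" where
  "chebU k s = sin (real (k + 1) * arccos s) / sin (arccos s)"

definition cpv :: "(real \<Rightarrow> real) \<Rightarrow> real \<Rightarrow> real" where
  "cpv D r = Lim (at_right 0)
     (\<lambda>\<epsilon>. integral {-1..r - \<epsilon>} (\<lambda>s. D s / (s - r))
         + integral {r + \<epsilon>..1} (\<lambda>s. D s / (s - r)))"

text \<open>Hadamard finite-part integral of D(s)/(s-r)^alpha over [-1,1], alpha >= 1,
  via the recursion: alpha = 1 is the Cauchy principal value, and
  FP_alpha(r) = 1/(alpha-1) d/dr FP_(alpha-1)(r).\<close>
fun hfp :: "nat \<Rightarrow> (real \<Rightarrow> real) \<Rightarrow> real \<Rightarrow> real" where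
  "hfp 0 D r = integral {-1..1} D"
| "hfp (Suc 0) D r = cpv D r"
| "hfp (Suc (Suc k)) D r = (1 / real (Suc k)) * deriv (hfp (Suc k) D) r"

end

theory Submission
  imports Defs
begin

text \<open>Write \<open>\<theta> = arccos s\<close>. On \<open>[-1,1]\<close> the weight
  \<open>U\<^sub>n(s) (1 - s\<^sup>2)\<^bsup>m - 1/2\<^esup>\<close> equals \<open>sin\<^bsup>2m-2\<^esup> \<theta> sin ((n + 1) \<theta>)\<close>;
  expanding \<open>(2 i sin \<theta>)\<^bsup>2m-2\<^esup> = (e\<^bsup>i\<theta>\<^esup> - e\<^bsup>-i\<theta>\<^esup>)\<^bsup>2m-2\<^esup>\<close> binomially
  turns it into a combination of the functions \<open>sin (N \<theta>)\<close>, \<open>N = n + 3 - 2m + 2j\<close>.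
  For these \<open>PV \<integral> sin (N arccos s) / (s - r) ds = - \<pi> cos (N arccos r)\<close>: for \<open>N = 1\<close>
  by an explicit primitive, and in general by induction on \<open>N\<close>, because
  \<open>sin ((N + 2) \<theta>) = 2 cos \<theta> sin ((N + 1) \<theta>) - sin (N \<theta>)\<close> with \<open>cos \<theta> = (s - r) + r\<close>
  reduces case \<open>N + 2\<close> to the two previous ones plus an ordinary integral.
  The finite-part integral of order 3 is half the second derivative in \<open>r\<close> of the
  principal value, and \<open>(cos (N arccos r))'' = N U'\<^sub>N\<^sub>-\<^sub>1(r)\<close> is a combination of
  \<open>U\<^sub>N\<^sub>-\<^sub>2(r)\<close> and \<open>U\<^sub>N(r)\<close>.\<close>

lemma sin_mult_Suc_Suc: "sin (real (N + 2) * t) = 2 * cos t * sin (real (N + 1) * t) - sin (real N * t)"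
proof -
  have "real (N + 2) * t = real (N + 1) * t + t" "real N * t = real (N + 1) * t - t"
    by (simp_all add: algebra_simps)
  then show ?thesis by (simp add: sin_add sin_diff)
qed

lemma cos_mult_Suc_Suc: "cos (real (N + 2) * t) = 2 * cos t * cos (real (N + 1) * t) - cos (real N * t)"
proof -
  have "real (N + 2) * t = real (N + 1) * t + t" "real N * t = real (N + 1) * t - t"
    by (simp_all add: algebra_simps)
  then show ?thesis by (simp add: cos_add cos_diff)
qed

lemma sin_power_even_mult_sin:
  fixes t a :: real
  shows "(-4) ^ p * sin t ^ (2 * p) * sin (a * t)
    = (\<Sum>j\<le>2 * p. (-1) ^ j * real (2 * p choose j) * sin ((a + 2 * real j - 2 * real p) * t))"
proof -
  define z where "z = cis t"
  have z_inv: "inverse z = cis (- t)" by (simp add: z_def)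
  have "(2 * \<i>) ^ (2 * p) = complex_of_real ((-4) ^ p)"
    by (simp add: power_mult power_mult_distrib)
  moreover have "z + - inverse z = 2 * \<i> * sin t"
    by (simp add: z_inv z_def complex_eq_iff)
  ultimately have "complex_of_real ((-4) ^ p * sin t ^ (2 * p)) = (z + - inverse z) ^ (2 * p)"
    by (simp add: power_mult_distrib)
  also have "\<dots> = (\<Sum>j\<le>2 * p. of_nat (2 * p choose j) * z ^ j * (- inverse z) ^ (2 * p - j))"
    by (rule binomial_ring)
  finally have "complex_of_real ((-4) ^ p * sin t ^ (2 * p)) * cis (a * t)
      = (\<Sum>j\<le>2 * p. of_nat (2 * p choose j) * (z ^ j * (- inverse z) ^ (2 * p - j) * cis (a * t)))"
    by (simp add: sum_distrib_right mult.assoc)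
  also have "\<dots> = (\<Sum>j\<le>2 * p. complex_of_real ((-1) ^ j * real (2 * p choose j))
      * cis ((a + 2 * real j - 2 * real p) * t))"
  proof (rule sum.cong[OF refl])
    fix j assume "j \<in> {..2 * p}"
    then have j: "j \<le> 2 * p" by simp
    have "z ^ j * (- inverse z) ^ (2 * p - j) * cis (a * t)
        = (-1) ^ (2 * p - j) * (z ^ j * inverse z ^ (2 * p - j) * cis (a * t))"
      unfolding power_minus[of "inverse z"] by (simp only: mult_ac)
    also have "(-1 :: complex) ^ (2 * p - j) = (-1) ^ j"
      using j by (simp add: minus_one_power_iff)
    also have "z ^ j * inverse z ^ (2 * p - j) * cis (a * t) = cis (real j * t + real (2 * p - j) * (- t) + a * t)"
      unfolding z_inv unfolding z_def Complex.DeMoivre cis_mult by simp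
    also have "real j * t + real (2 * p - j) * (- t) + a * t = (a + 2 * real j - 2 * real p) * t"
      using j by (simp add: of_nat_diff algebra_simps)
    finally have "z ^ j * (- inverse z) ^ (2 * p - j) * cis (a * t) = (-1) ^ j * cis ((a + 2 * real j - 2 * real p) * t)" .
    then show "of_nat (2 * p choose j) * (z ^ j * (- inverse z) ^ (2 * p - j) * cis (a * t))
        = complex_of_real ((-1) ^ j * real (2 * p choose j)) * cis ((a + 2 * real j - 2 * real p) * t)"
      by simp
  qed
  finally have "complex_of_real ((-4) ^ p * sin t ^ (2 * p)) * cis (a * t)
      = (\<Sum>j\<le>2 * p. complex_of_real ((-1) ^ j * real (2 * p choose j))
          * cis ((a + 2 * real j - 2 * real p) * t))" .
  from arg_cong[where f = Im, OF this] show ?thesis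
    by simp
qed

definition punctured_integral :: "(real \<Rightarrow> real) \<Rightarrow> real \<Rightarrow> real \<Rightarrow> real" where
  "punctured_integral g r e = integral {-1..r - e} g + integral {r + e..1} g"

lemma cpv_eqI:
  assumes "(punctured_integral (\<lambda>s. D s / (s - r)) r \<longlongrightarrow> L) (at_right 0)"
  shows "cpv D r = L"
  using assms unfolding cpv_def punctured_integral_def[abs_def]
  by (intro tendsto_Lim) (auto simp: trivial_limit_at_right_real)

lemma punctured_integral_pieces_subset:
  fixes r e :: real
  assumes "\<bar>r\<bar> < 1" "0 < e"
  shows "{-1..r - e} \<subseteq> {-1..1} - {r}" "{r + e..1} \<subseteq> {-1..1} - {r}"
  using assms unfolding abs_less_iff by auto

lemma punctured_integral_cong:
  assumes "\<bar>r\<bar> < 1" "0 < e" "\<And>s. s \<in> {-1..1} \<Longrightarrow> s \<noteq> r \<Longrightarrow> g s = h s"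
  shows "punctured_integral g r e = punctured_integral h r e"
  unfolding punctured_integral_def using assms
  by (intro arg_cong2[where f = "(+)"] integral_cong) auto

lemma punctured_integral_add:
  assumes "\<bar>r\<bar> < 1" "0 < e"
    and "continuous_on ({-1..1} - {r}) g" "continuous_on ({-1..1} - {r}) h"
  shows "punctured_integral (\<lambda>s. g s + h s) r e = punctured_integral g r e + punctured_integral h r e"
  unfolding punctured_integral_def
  using assms punctured_integral_pieces_subset[OF assms(1,2)]
  by (simp add: integral_add integrable_continuous_interval continuous_on_subset)

lemma punctured_integral_diff:
  assumes "\<bar>r\<bar> < 1" "0 < e"
    and "continuous_on ({-1..1} - {r}) g" "continuous_on ({-1..1} - {r}) h"
  shows "punctured_integral (\<lambda>s. g s - h s) r e = punctured_integral g r e - punctured_integral h r e"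
  unfolding punctured_integral_def
  using assms punctured_integral_pieces_subset[OF assms(1,2)]
  by (simp add: integral_diff integrable_continuous_interval continuous_on_subset)

lemma punctured_integral_mult_right:
  "punctured_integral (\<lambda>s. c * g s) r e = c * punctured_integral g r e"
  unfolding punctured_integral_def by (simp add: distrib_left)

lemma punctured_integral_sum:
  assumes "\<bar>r\<bar> < 1" "0 < e" "finite J"
    and "\<And>j. j \<in> J \<Longrightarrow> continuous_on ({-1..1} - {r}) (g j)"
  shows "punctured_integral (\<lambda>s. \<Sum>j\<in>J. g j s) r e = (\<Sum>j\<in>J. punctured_integral (g j) r e)"
  unfolding punctured_integral_def
  using assms punctured_integral_pieces_subset[OF assms(1,2)]
  by (subst (1 2) integral_sum)
    (auto intro!: integrable_continuous_interval intro: continuous_on_subset simp: sum.distrib)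

lemma isCont_imp_symmetric_difference_tendsto_0:
  fixes F :: "real \<Rightarrow> real"
  assumes "isCont F r"
  shows "((\<lambda>e. F (r - e) - F (r + e)) \<longlongrightarrow> 0) (at_right 0)"
proof -
  have "((\<lambda>e. F (r - e)) \<longlongrightarrow> F r) (at_right 0)"
    by (rule isCont_tendsto_compose[OF assms]) (auto intro!: tendsto_eq_intros)
  moreover have "((\<lambda>e. F (r + e)) \<longlongrightarrow> F r) (at_right 0)"
    by (rule isCont_tendsto_compose[OF assms]) (auto intro!: tendsto_eq_intros)
  ultimately show ?thesis
    using tendsto_diff by fastforce
qed

lemma punctured_integral_tendsto_primitive:
  fixes F g :: "real \<Rightarrow> real"
  assumes r: "\<bar>r\<bar> < 1"
    and cont: "continuous_on ({-1..1} - {r}) F"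
    and deriv: "\<And>x. -1 < x \<Longrightarrow> x < 1 \<Longrightarrow> x \<noteq> r \<Longrightarrow> (F has_real_derivative g x) (at x)"
    and jump: "((\<lambda>e. F (r - e) - F (r + e)) \<longlongrightarrow> 0) (at_right 0)"
  shows "(punctured_integral g r \<longlongrightarrow> F 1 - F (-1)) (at_right 0)"
proof -
  have ftc: "integral {a..b} g = F b - F a"
    if ab: "-1 \<le> a" "a \<le> b" "b \<le> 1" "r \<notin> {a..b}" for a b
  proof (rule integral_unique, rule fundamental_theorem_of_calculus_interior)
    show "continuous_on {a..b} F" using ab by (auto intro: continuous_on_subset[OF cont])
    show "(F has_vector_derivative g x) (at x)" if "x \<in> {a<..<b}" for x
      using that ab by (intro deriv[unfolded has_real_derivative_iff_has_vector_derivative]) auto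
  qed (fact ab(2))
  have "eventually (\<lambda>e. e \<in> {0<..<1 - \<bar>r\<bar>}) (at_right 0)"
    using r by (intro eventually_at_right_real) auto
  then have "eventually (\<lambda>e. F 1 - F (-1) + (F (r - e) - F (r + e)) = punctured_integral g r e) (at_right 0)"
  proof (rule eventually_mono)
    fix e assume "e \<in> {0<..<1 - \<bar>r\<bar>}"
    with r show "F 1 - F (-1) + (F (r - e) - F (r + e)) = punctured_integral g r e"
      unfolding punctured_integral_def by (subst (1 2) ftc) auto
  qed
  with tendsto_add[OF tendsto_const jump] show ?thesis
    by (auto intro: Lim_transform_eventually)
qed

text \<open>Adding \<open>sqrt (1 - r\<^sup>2) ln |s - r|\<close>, written \<open>sqrt (1 - r\<^sup>2) (ln ((s - r)\<^sup>2) / 2)\<close>, gives a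
  primitive of \<open>sqrt (1 - s\<^sup>2) / (s - r)\<close> on either side of \<open>r\<close>; the logarithmic term
  is even about \<open>r\<close>, so it drops out of symmetric differences at \<open>r\<close>.\<close>

definition sqrt_div_regular_primitive :: "real \<Rightarrow> real \<Rightarrow> real" where
  "sqrt_div_regular_primitive r s =
     sqrt (1 - s\<^sup>2) - r * arcsin s - sqrt (1 - r\<^sup>2) * ln (1 - r * s + sqrt (1 - r\<^sup>2) * sqrt (1 - s\<^sup>2))"

lemma sqrt_div_regular_primitive_log_arg_pos:
  fixes r s :: real
  assumes "\<bar>r\<bar> < 1" "\<bar>s\<bar> \<le> 1"
  shows "0 < 1 - r * s + sqrt (1 - r\<^sup>2) * sqrt (1 - s\<^sup>2)"
proof -
  have "\<bar>r\<bar> * \<bar>s\<bar> \<le> \<bar>r\<bar>"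
    using assms by (intro mult_left_le) auto
  then have "\<bar>r * s\<bar> < 1"
    using assms by (simp add: abs_mult)
  moreover have "0 \<le> sqrt (1 - r\<^sup>2) * sqrt (1 - s\<^sup>2)"
    using assms by (simp add: abs_square_le_1 less_imp_le)
  ultimately show ?thesis by linarith
qed

lemma continuous_on_sqrt_div_regular_primitive:
  assumes "\<bar>r\<bar> < 1"
  shows "continuous_on {-1..1} (sqrt_div_regular_primitive r)"
  unfolding sqrt_div_regular_primitive_def
  using sqrt_div_regular_primitive_log_arg_pos[OF assms]
  by (intro continuous_intros) (auto simp: less_imp_neq[symmetric])

lemma has_real_derivative_sqrt_div_primitive:
  assumes r: "\<bar>r\<bar> < 1" and s: "-1 < s" "s < 1" "s \<noteq> r"
  shows "((\<lambda>s. sqrt_div_regular_primitive r s + sqrt (1 - r\<^sup>2) * (ln ((s - r)\<^sup>2) / 2))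
           has_real_derivative sqrt (1 - s\<^sup>2) / (s - r)) (at s)"
proof -
  define c where "c = sqrt (1 - r\<^sup>2)"
  define w where "w = sqrt (1 - s\<^sup>2)"
  define P where "P = 1 - r * s + c * w"
  have s2: "s\<^sup>2 < 1" using s by (simp add: abs_square_less_1 abs_less_iff)
  have c: "c\<^sup>2 = 1 - r\<^sup>2" using r by (simp add: c_def abs_square_less_1 less_imp_le)
  have w: "w\<^sup>2 = 1 - s\<^sup>2" "0 < w" using s2 by (auto simp: w_def)
  have P: "0 < P"
    unfolding P_def c_def w_def using r s by (intro sqrt_div_regular_primitive_log_arg_pos) auto
  have d1: "((\<lambda>s. sqrt (1 - s\<^sup>2)) has_real_derivative - s / w) (at s)"
    using s2 by (auto intro!: derivative_eq_intros simp: w_def inverse_eq_divide)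
  have d2: "(arcsin has_real_derivative 1 / w) (at s)"
    using DERIV_arcsin[OF s(1,2)] by (simp add: w_def inverse_eq_divide)
  have d3: "((\<lambda>s. ln (1 - r * s + c * sqrt (1 - s\<^sup>2))) has_real_derivative (- r - c * s / w) / P) (at s)"
    using s2 P by (auto intro!: derivative_eq_intros simp: w_def P_def inverse_eq_divide)
  have d4: "((\<lambda>s. ln ((s - r)\<^sup>2) / 2) has_real_derivative 1 / (s - r)) (at s)"
  proof -
    have "0 < (s - r)\<^sup>2" using s by simp
    then show ?thesis
      by (auto intro!: derivative_eq_intros simp: divide_simps) (simp add: power2_eq_square algebra_simps)
  qed
  have "((\<lambda>s. sqrt_div_regular_primitive r s + c * (ln ((s - r)\<^sup>2) / 2)) has_real_derivative
          - s / w - r * (1 / w) - c * ((- r - c * s / w) / P) + c * (1 / (s - r))) (at s)"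
    unfolding sqrt_div_regular_primitive_def c_def[symmetric]
    by (intro DERIV_add DERIV_diff DERIV_cmult d1 d2 d3 d4)
  moreover have "- s / w - r * (1 / w) - c * ((- r - c * s / w) / P) + c * (1 / (s - r)) = w / (s - r)"
  proof -
    have "- s / w - r * (1 / w) - c * ((- r - c * s / w) / P) + c * (1 / (s - r))
        = ((- (s + r) * P + c * (r * w + c * s)) * (s - r) + c * w * P) / (w * P * (s - r))"
      using w P s by (simp add: field_simps)
    also have "(- (s + r) * P + c * (r * w + c * s)) * (s - r) + c * w * P = w\<^sup>2 * P"
      unfolding P_def using c w(1) by algebra
    finally show ?thesis
      using w P by (simp add: power2_eq_square)
  qed
  ultimately show ?thesis by (simp add: c_def w_def)
qed

lemma punctured_integral_sqrt_div_tendsto: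
  assumes r: "\<bar>r\<bar> < 1"
  shows "(punctured_integral (\<lambda>s. sqrt (1 - s\<^sup>2) / (s - r)) r \<longlongrightarrow> - pi * r) (at_right 0)"
proof -
  define H where "H s = sqrt_div_regular_primitive r s + sqrt (1 - r\<^sup>2) * (ln ((s - r)\<^sup>2) / 2)" for s
  note K_cont = continuous_on_sqrt_div_regular_primitive[OF r]
  have "(punctured_integral (\<lambda>s. sqrt (1 - s\<^sup>2) / (s - r)) r \<longlongrightarrow> H 1 - H (-1)) (at_right 0)"
  proof (rule punctured_integral_tendsto_primitive[OF r])
    show "continuous_on ({-1..1} - {r}) H"
      unfolding H_def by (intro continuous_intros continuous_on_subset[OF K_cont]) auto
    show "(H has_real_derivative sqrt (1 - x\<^sup>2) / (x - r)) (at x)" if "-1 < x" "x < 1" "x \<noteq> r" for x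
      using has_real_derivative_sqrt_div_primitive[OF r that] by (simp add: H_def[abs_def])
    have "((\<lambda>e. sqrt_div_regular_primitive r (r - e) - sqrt_div_regular_primitive r (r + e)) \<longlongrightarrow> 0)
            (at_right 0)"
      by (intro isCont_imp_symmetric_difference_tendsto_0 continuous_on_interior[OF K_cont])
        (use r in \<open>auto simp: abs_less_iff\<close>)
    then show "((\<lambda>e. H (r - e) - H (r + e)) \<longlongrightarrow> 0) (at_right 0)"
      by (simp add: H_def)
  qed
  moreover have "H 1 - H (-1) = - pi * r"
  proof -
    have "0 < 1 - r" "0 < 1 + r" using r by auto
    moreover have "(-1 - r)\<^sup>2 = (1 + r)\<^sup>2" by (simp add: power2_eq_square algebra_simps)
    ultimately show ?thesis
      by (simp add: H_def sqrt_div_regular_primitive_def ln_realpow)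
  qed
  ultimately show ?thesis by simp
qed

lemma punctured_integral_sin_mult_arccos_tendsto:
  assumes r: "\<bar>r\<bar> < 1"
  shows "(punctured_integral (\<lambda>s. sin (real N * arccos s)) r \<longlongrightarrow> (if N = 1 then pi / 2 else 0))
           (at_right 0)"
proof -
  \<comment> \<open>\<open>F\<close> below is a primitive since \<open>2 sin (N \<theta>) sin \<theta> = cos ((N - 1) \<theta>) - cos ((N + 1) \<theta>)\<close>;
    the branch \<open>a = 0\<close> of \<open>S\<close> is needed for \<open>N = 1\<close>.\<close>
  define S where "S a = (\<lambda>t. if a = 0 then t else sin (a * t) / a)" for a :: real
  have S_deriv: "(S a has_real_derivative cos (a * t)) (at t)" for a t
    by (cases "a = 0") (auto simp: S_def intro!: derivative_eq_intros)
  have S_cont: "continuous_on UNIV (S a)" for a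
    by (rule continuous_at_imp_continuous_on) (auto intro: DERIV_isCont[OF S_deriv])
  define F where "F s = (S (real N + 1) (arccos s) - S (real N - 1) (arccos s)) / 2" for s
  have F_cont: "continuous_on {-1..1} F"
    unfolding F_def
    by (intro continuous_intros continuous_on_compose2[OF S_cont continuous_on_arccos']) auto
  have "(punctured_integral (\<lambda>s. sin (real N * arccos s)) r \<longlongrightarrow> F 1 - F (-1)) (at_right 0)"
  proof (rule punctured_integral_tendsto_primitive[OF r])
    show "continuous_on ({-1..1} - {r}) F"
      using F_cont by (rule continuous_on_subset) auto
    show "((\<lambda>e. F (r - e) - F (r + e)) \<longlongrightarrow> 0) (at_right 0)"
      by (intro isCont_imp_symmetric_difference_tendsto_0 continuous_on_interior[OF F_cont])
        (use r in \<open>auto simp: abs_less_iff\<close>)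
    fix x :: real assume x: "-1 < x" "x < 1"
    define w where "w = sqrt (1 - x\<^sup>2)"
    let ?A = "(real N + 1) * arccos x" and ?B = "(real N - 1) * arccos x"
    have "(F has_real_derivative (cos ?A * inverse (- w) - cos ?B * inverse (- w)) / 2) (at x)"
      unfolding F_def[abs_def] w_def
      by (intro DERIV_cdivide DERIV_diff DERIV_chain2[OF S_deriv DERIV_arccos[OF x]])
    moreover have "cos ?B - cos ?A = 2 * sin (real N * arccos x) * w"
      using x by (simp add: algebra_simps cos_add cos_diff sin_arccos w_def)
    moreover have "w \<noteq> 0"
      using x by (simp add: w_def abs_square_eq_1 abs_less_iff)
    ultimately show "(F has_real_derivative sin (real N * arccos x)) (at x)"
      by (simp add: left_diff_distrib[symmetric])
  qed
  moreover have "F 1 - F (-1) = (if N = 1 then pi / 2 else 0)"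
  proof -
    have "sin ((real N + 1) * pi) = 0" "sin ((real N - 1) * pi) = 0"
      by (simp_all add: algebra_simps sin_add sin_diff)
    then show ?thesis by (simp add: F_def S_def)
  qed
  ultimately show ?thesis by simp
qed

lemma punctured_integral_sin_mult_arccos_div_rec:
  assumes r: "\<bar>r\<bar> < 1" and e: "0 < e"
  shows "punctured_integral (\<lambda>s. sin (real (N + 2) * arccos s) / (s - r)) r e
    = 2 * punctured_integral (\<lambda>s. sin (real (N + 1) * arccos s)) r e
      + 2 * r * punctured_integral (\<lambda>s. sin (real (N + 1) * arccos s) / (s - r)) r e
      - punctured_integral (\<lambda>s. sin (real N * arccos s) / (s - r)) r e"
proof -
  let ?f = "\<lambda>k s. sin (real k * arccos s)"
  have "punctured_integral (\<lambda>s. ?f (N + 2) s / (s - r)) r e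
      = punctured_integral (\<lambda>s. 2 * ?f (N + 1) s + 2 * r * (?f (N + 1) s / (s - r)) - ?f N s / (s - r)) r e"
  proof (rule punctured_integral_cong[OF r e])
    fix s :: real assume s: "s \<in> {-1..1}" "s \<noteq> r"
    have div: "a / (s - r) = 2 * b + 2 * r * (b / (s - r)) - c / (s - r)" if "a = 2 * s * b - c" for a b c :: real
    proof -
      have "s - r \<noteq> 0" using s(2) by simp
      then show ?thesis using that by (simp add: divide_simps) (simp add: algebra_simps)
    qed
    show "?f (N + 2) s / (s - r) = 2 * ?f (N + 1) s + 2 * r * (?f (N + 1) s / (s - r)) - ?f N s / (s - r)"
      by (rule div, subst sin_mult_Suc_Suc) (use s(1) in simp)
  qed
  also have "\<dots> = punctured_integral (\<lambda>s. 2 * ?f (N + 1) s + 2 * r * (?f (N + 1) s / (s - r))) r e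
      - punctured_integral (\<lambda>s. ?f N s / (s - r)) r e"
    by (intro punctured_integral_diff r e continuous_intros) auto
  also have "punctured_integral (\<lambda>s. 2 * ?f (N + 1) s + 2 * r * (?f (N + 1) s / (s - r))) r e
      = 2 * punctured_integral (?f (N + 1)) r e
        + 2 * r * punctured_integral (\<lambda>s. ?f (N + 1) s / (s - r)) r e"
  proof -
    have "continuous_on ({-1..1} - {r}) (\<lambda>s. 2 * ?f (N + 1) s)"
      "continuous_on ({-1..1} - {r}) (\<lambda>s. 2 * r * (?f (N + 1) s / (s - r)))"
      by (intro continuous_intros; auto)+
    then show ?thesis
      by (simp only: punctured_integral_add[OF r e] punctured_integral_mult_right)
  qed
  finally show ?thesis .
qed

lemma punctured_integral_sin_mult_arccos_div_tendsto:
  assumes r: "\<bar>r\<bar> < 1"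
  shows "(punctured_integral (\<lambda>s. sin (real N * arccos s) / (s - r)) r
           \<longlongrightarrow> (if N = 0 then 0 else - pi * cos (real N * arccos r))) (at_right 0)"
proof (induction N rule: induct_nat_012)
  case 0
  show ?case by (simp add: punctured_integral_def)
next
  case 1
  have "eventually (\<lambda>e. punctured_integral (\<lambda>s. sqrt (1 - s\<^sup>2) / (s - r)) r e
      = punctured_integral (\<lambda>s. sin (real 1 * arccos s) / (s - r)) r e) (at_right 0)"
    by (rule eventually_mono[OF eventually_at_right_less])
      (auto intro!: punctured_integral_cong simp: r sin_arccos)
  with punctured_integral_sqrt_div_tendsto[OF r] show ?case
    using r by (auto dest: Lim_transform_eventually)
next
  case (ge2 N)
  let ?t = "arccos r"
  let ?E = "\<lambda>e. 2 * punctured_integral (\<lambda>s. sin (real (N + 1) * arccos s)) r e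
    + 2 * r * punctured_integral (\<lambda>s. sin (real (N + 1) * arccos s) / (s - r)) r e
    - punctured_integral (\<lambda>s. sin (real N * arccos s) / (s - r)) r e"
  have "(?E \<longlongrightarrow> 2 * (if N + 1 = 1 then pi / 2 else 0)
        + 2 * r * (- pi * cos (real (N + 1) * ?t))
        - (if N = 0 then 0 else - pi * cos (real N * ?t))) (at_right 0)"
    using ge2.IH punctured_integral_sin_mult_arccos_tendsto[OF r, of "N + 1"]
    by (intro tendsto_intros) simp_all
  moreover have "2 * (if N + 1 = 1 then pi / 2 else 0) + 2 * r * (- pi * cos (real (N + 1) * ?t))
      - (if N = 0 then 0 else - pi * cos (real N * ?t)) = - pi * cos (real (N + 2) * ?t)"
    using r by (subst cos_mult_Suc_Suc) (auto simp: algebra_simps abs_le_iff)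
  moreover have "eventually (\<lambda>e. ?E e = punctured_integral (\<lambda>s. sin (real (N + 2) * arccos s) / (s - r)) r e)
      (at_right 0)"
    by (rule eventually_mono[OF eventually_at_right_less])
      (rule punctured_integral_sin_mult_arccos_div_rec[OF r, symmetric])
  ultimately have "(punctured_integral (\<lambda>s. sin (real (N + 2) * arccos s) / (s - r)) r
      \<longlongrightarrow> - pi * cos (real (N + 2) * ?t)) (at_right 0)"
    using Lim_transform_eventually by fastforce
  then show ?case by simp
qed

lemma cpv_sum_sin_mult_arccos:
  assumes r: "\<bar>r\<bar> < 1" and J: "finite J" and N: "\<And>j. j \<in> J \<Longrightarrow> 0 < N j"
    and D: "\<And>s. s \<in> {-1..1} \<Longrightarrow> D s = (\<Sum>j\<in>J. c j * sin (real (N j) * arccos s))"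
  shows "cpv D r = (\<Sum>j\<in>J. c j * (- pi * cos (real (N j) * arccos r)))"
proof (rule cpv_eqI)
  have "((\<lambda>e. \<Sum>j\<in>J. c j * punctured_integral (\<lambda>s. sin (real (N j) * arccos s) / (s - r)) r e)
      \<longlongrightarrow> (\<Sum>j\<in>J. c j * (- pi * cos (real (N j) * arccos r)))) (at_right 0)"
  proof (intro tendsto_sum tendsto_mult_left)
    fix j assume "j \<in> J"
    then have "N j \<noteq> 0" using N by blast
    then show "(punctured_integral (\<lambda>s. sin (real (N j) * arccos s) / (s - r)) r
        \<longlongrightarrow> - pi * cos (real (N j) * arccos r)) (at_right 0)"
      using punctured_integral_sin_mult_arccos_div_tendsto[OF r, of "N j"] by simp
  qed
  moreover have "eventually (\<lambda>e. (\<Sum>j\<in>J. c j * punctured_integral (\<lambda>s. sin (real (N j) * arccos s) / (s - r)) r e)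
      = punctured_integral (\<lambda>s. D s / (s - r)) r e) (at_right 0)"
  proof (rule eventually_mono[OF eventually_at_right_less])
    fix e :: real assume e: "0 < e"
    have "punctured_integral (\<lambda>s. D s / (s - r)) r e
        = punctured_integral (\<lambda>s. \<Sum>j\<in>J. c j * (sin (real (N j) * arccos s) / (s - r))) r e"
      by (rule punctured_integral_cong[OF r e]) (simp add: D sum_divide_distrib)
    also have "\<dots> = (\<Sum>j\<in>J. c j * punctured_integral (\<lambda>s. sin (real (N j) * arccos s) / (s - r)) r e)"
    proof -
      have "continuous_on ({-1..1} - {r}) (\<lambda>s. c j * (sin (real (N j) * arccos s) / (s - r)))" for j
        by (intro continuous_intros) auto
      then show ?thesis
        by (simp only: punctured_integral_sum[OF r e J] punctured_integral_mult_right)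
    qed
    finally show "(\<Sum>j\<in>J. c j * punctured_integral (\<lambda>s. sin (real (N j) * arccos s) / (s - r)) r e)
        = punctured_integral (\<lambda>s. D s / (s - r)) r e" ..
  qed
  ultimately show "(punctured_integral (\<lambda>s. D s / (s - r)) r \<longlongrightarrow> (\<Sum>j\<in>J. c j * (- pi * cos (real (N j) * arccos r))))
      (at_right 0)"
    by (rule Lim_transform_eventually)
qed

lemma has_real_derivative_cos_mult_arccos:
  assumes x: "\<bar>x\<bar> < 1"
  shows "((\<lambda>y. cos (real (k + 1) * arccos y)) has_real_derivative real (k + 1) * chebU k x) (at x)"
proof -
  have x': "-1 < x" "x < 1" using x by auto
  have "((\<lambda>y. cos (real (k + 1) * arccos y)) has_real_derivative
      - sin (real (k + 1) * arccos x) * real (k + 1) * inverse (- sqrt (1 - x\<^sup>2))) (at x)"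
    by (rule DERIV_chain2[OF _ DERIV_arccos[OF x']]) (auto intro!: derivative_eq_intros)
  moreover have "chebU k x = sin (real (k + 1) * arccos x) / sqrt (1 - x\<^sup>2)"
    using x' by (simp add: chebU_def sin_arccos)
  ultimately show ?thesis
    by (simp add: divide_inverse mult_ac)
qed

lemma has_real_derivative_chebU_Suc:
  assumes x: "\<bar>x\<bar> < 1"
  shows "(chebU (Suc k) has_real_derivative
           (real (k + 3) * chebU k x - real (k + 1) * chebU (k + 2) x) / (2 * (1 - x\<^sup>2))) (at x)"
proof -
  have x': "-1 < x" "x < 1" using x by auto
  define t where "t = arccos x"
  define w where "w = sqrt (1 - x\<^sup>2)"
  define M where "M = real (k + 2)"
  have w: "w \<noteq> 0" "w\<^sup>2 = 1 - x\<^sup>2" "sin t = w" "cos t = x"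
    using x x' by (auto simp: w_def t_def sin_arccos abs_square_eq_1 abs_square_le_1)
  have "(chebU (Suc k) has_real_derivative
      ((cos (M * t) * M * inverse (- w)) * w - sin (M * t) * (x * inverse (- w))) / (w * w)) (at x)"
  proof -
    have "((\<lambda>y. sin (M * arccos y) / sin (arccos y)) has_real_derivative
        ((cos (M * t) * M * inverse (- w)) * sin t - sin (M * t) * (cos t * inverse (- w))) / (sin t * sin t)) (at x)"
      unfolding t_def w_def
      by (intro DERIV_divide DERIV_chain2[OF _ DERIV_arccos[OF x']])
        (use x' w(1) in \<open>auto intro!: derivative_eq_intros simp: sin_arccos w_def\<close>)
    then show ?thesis
      unfolding w(3,4) by (simp add: chebU_def[abs_def] M_def)
  qed
  moreover have "((cos (M * t) * M * inverse (- w)) * w - sin (M * t) * (x * inverse (- w))) / (w * w)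
      = (real (k + 3) * chebU k x - real (k + 1) * chebU (k + 2) x) / (2 * (1 - x\<^sup>2))"
  proof -
    have a: "real (k + 1) * t = M * t - t" and b: "real (k + 2 + 1) * t = M * t + t"
      by (simp_all add: M_def algebra_simps)
    have u: "chebU k x = (sin (M * t) * x - cos (M * t) * w) / w"
      "chebU (k + 2) x = (sin (M * t) * x + cos (M * t) * w) / w"
      unfolding chebU_def t_def[symmetric] a b sin_add sin_diff w(3,4) by simp_all
    have m: "real (k + 3) = M + 1" "real (k + 1) = M - 1"
      by (simp_all add: M_def)
    show ?thesis
      using w(1) unfolding u m w(2)[symmetric] by (simp add: field_simps power2_eq_square)
  qed
  ultimately show ?thesis by simp
qed

lemma hfp_Suc_Suc_eqI:
  assumes "open S" "x \<in> S" "\<And>y. y \<in> S \<Longrightarrow> hfp (Suc k) D y = g y"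
    and "(g has_real_derivative g') (at x)"
  shows "hfp (Suc (Suc k)) D x = g' / real (Suc k)"
proof -
  have "(hfp (Suc k) D has_real_derivative g') (at x)"
    by (rule has_field_derivative_transform_within_open[OF assms(4,1,2)]) (simp add: assms(3))
  then show ?thesis by (simp add: DERIV_imp_deriv)
qed

lemma hfp3_sum_sin_mult_arccos:
  assumes r: "\<bar>r\<bar> < 1" and J: "finite J"
    and D: "\<And>s. s \<in> {-1..1} \<Longrightarrow> D s = (\<Sum>j\<in>J. c j * sin (real (k j + 2) * arccos s))"
  shows "hfp 3 D r = - pi / (4 * (1 - r\<^sup>2)) *
    (\<Sum>j\<in>J. c j * real (k j + 2) * (real (k j + 3) * chebU (k j) r - real (k j + 1) * chebU (k j + 2) r))"
proof -
  let ?S = "{-1<..<1 :: real}"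
  have hfp1: "hfp (Suc 0) D x = (\<Sum>j\<in>J. c j * (- pi * cos (real (k j + 2) * arccos x)))"
    if "x \<in> ?S" for x
  proof -
    have "\<bar>x\<bar> < 1" using that by auto
    then have "cpv D x = (\<Sum>j\<in>J. c j * (- pi * cos (real (k j + 2) * arccos x)))"
      by (rule cpv_sum_sin_mult_arccos[OF _ J _ D]) auto
    then show ?thesis by simp
  qed
  have hfp2: "hfp (Suc (Suc 0)) D x = (\<Sum>j\<in>J. c j * (- pi * (real (k j + 2) * chebU (k j + 1) x)))"
    if "x \<in> ?S" for x
  proof -
    have "((\<lambda>y. cos (real (k j + 2) * arccos y)) has_real_derivative real (k j + 2) * chebU (k j + 1) x) (at x)"
      for j
      using has_real_derivative_cos_mult_arccos[of x "k j + 1"] that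
      unfolding add.assoc one_add_one by auto
    then have "((\<lambda>y. \<Sum>j\<in>J. c j * (- pi * cos (real (k j + 2) * arccos y))) has_real_derivative
        (\<Sum>j\<in>J. c j * (- pi * (real (k j + 2) * chebU (k j + 1) x)))) (at x)"
      by (intro DERIV_sum DERIV_cmult)
    from hfp_Suc_Suc_eqI[OF open_greaterThanLessThan that hfp1 this] show ?thesis by simp
  qed
  have "((\<lambda>x. \<Sum>j\<in>J. c j * (- pi * (real (k j + 2) * chebU (k j + 1) x))) has_real_derivative
      (\<Sum>j\<in>J. c j * (- pi * (real (k j + 2) *
        ((real (k j + 3) * chebU (k j) r - real (k j + 1) * chebU (k j + 2) r) / (2 * (1 - r\<^sup>2))))))) (at r)"
    using has_real_derivative_chebU_Suc[OF r] by (intro DERIV_sum DERIV_cmult) auto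
  moreover have "r \<in> ?S" using r by auto
  ultimately have "hfp (Suc (Suc (Suc 0))) D r = (\<Sum>j\<in>J. c j * (- pi * (real (k j + 2) *
      ((real (k j + 3) * chebU (k j) r - real (k j + 1) * chebU (k j + 2) r) / (2 * (1 - r\<^sup>2)))))) / 2"
    using hfp_Suc_Suc_eqI[OF open_greaterThanLessThan _ hfp2] by simp
  then have "hfp 3 D r = (\<Sum>j\<in>J. c j * (- pi * (real (k j + 2) *
      ((real (k j + 3) * chebU (k j) r - real (k j + 1) * chebU (k j + 2) r) / (2 * (1 - r\<^sup>2)))))) / 2"
    by (simp add: numeral_3_eq_3)
  also have "\<dots> = - pi / (4 * (1 - r\<^sup>2)) *
      (\<Sum>j\<in>J. c j * real (k j + 2) * (real (k j + 3) * chebU (k j) r - real (k j + 1) * chebU (k j + 2) r))"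
  proof -
    have "c * (- pi * (M * (X / (2 * (1 - r\<^sup>2))))) / 2 = - pi / (4 * (1 - r\<^sup>2)) * (c * M * X)"
      for c M X :: real
      by (simp add: field_simps)
    then show ?thesis
      by (simp only: sum_distrib_left sum_divide_distrib)
  qed
  finally show ?thesis .
qed

lemma chebU_mult_powr_eq:
  assumes m: "1 \<le> m" and s: "s \<in> {-1..1}"
  shows "chebU n s * (1 - s\<^sup>2) powr (real m - 1/2)
    = sin (arccos s) ^ (2 * (m - 1)) * sin (real (n + 1) * arccos s)"
proof (cases "s = 1 \<or> s = -1")
  case True
  then have "sin (real (n + 1) * arccos s) = 0"
    using sin_npi[of "n + 1"] by auto
  then show ?thesis using True by (auto simp: chebU_def)
next
  case False
  define w where "w = sqrt (1 - s\<^sup>2)"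
  have s2: "0 < 1 - s\<^sup>2" using s False by (auto simp: abs_square_less_1)
  have w: "0 < w" "sin (arccos s) = w" "w\<^sup>2 = 1 - s\<^sup>2"
    using s s2 by (auto simp: w_def sin_arccos)
  have exp: "real m - 1/2 = real (m - 1) + 1/2" using m by (simp add: of_nat_diff)
  have "(1 - s\<^sup>2) powr (real m - 1/2) = (1 - s\<^sup>2) ^ (m - 1) * w"
    unfolding exp powr_add powr_realpow[OF s2] powr_half_sqrt[OF less_imp_le[OF s2]] w_def ..
  also have "(1 - s\<^sup>2) ^ (m - 1) = w ^ (2 * (m - 1))"
    unfolding w(3)[symmetric] by (simp add: power_mult)
  finally show ?thesis
    unfolding chebU_def w(2) using w(1) by (simp add: field_simps)
qed

lemma chebU_mult_powr_expansion:
  assumes m: "1 \<le> m" and n: "2 * m \<le> n + 3" and s: "s \<in> {-1..1}"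
  shows "chebU n s * (1 - s\<^sup>2) powr (real m - 1/2)
    = (\<Sum>j\<in>{0..2 * m - 2}. (-1) ^ j * real ((2 * m - 2) choose j) / (-4) ^ (m - 1)
        * sin (real (n + 3 - 2 * m + 2 * j) * arccos s))"
proof -
  have idx: "real (n + 1) + 2 * real j - 2 * real (m - 1) = real (n + 3 - 2 * m + 2 * j)" for j
    using m n by (simp add: of_nat_diff)
  have "(-4) ^ (m - 1) * (chebU n s * (1 - s\<^sup>2) powr (real m - 1/2))
      = (-4) ^ (m - 1) * sin (arccos s) ^ (2 * (m - 1)) * sin (real (n + 1) * arccos s)"
    using m s by (simp add: chebU_mult_powr_eq)
  also have "\<dots> = (\<Sum>j\<le>2 * (m - 1). (-1) ^ j * real (2 * (m - 1) choose j)
      * sin ((real (n + 1) + 2 * real j - 2 * real (m - 1)) * arccos s))"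
    by (rule sin_power_even_mult_sin)
  also have "\<dots> = (\<Sum>j\<in>{0..2 * m - 2}. (-1) ^ j * real ((2 * m - 2) choose j)
      * sin (real (n + 3 - 2 * m + 2 * j) * arccos s))"
    unfolding idx by (simp add: atLeast0AtMost right_diff_distrib')
  finally show ?thesis
    by (simp add: sum_divide_distrib[symmetric] field_simps)
qed

lemma minus_one_power_mult_half_power:
  assumes "1 \<le> m"
  shows "(-1) ^ m * (1/2) ^ (2 * m) = (- 1 / (4 * (-4) ^ (m - 1)) :: real)"
proof -
  obtain q where q: "m = Suc q" using assms by (cases m) auto
  have "(4 :: real) ^ q = (2 ^ q)\<^sup>2" by (simp add: power2_eq_square power_mult_distrib[symmetric])
  then show ?thesis unfolding q by (simp add: power_mult power_minus' field_simps)
qed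

theorem mainTheorem6:
  fixes m n :: nat and r :: real
  assumes "m \<ge> 2" and "n \<ge> 2 * m" and "\<bar>r\<bar> < 1"
  shows "hfp 3 (\<lambda>s. chebU n s * (1 - s\<^sup>2) powr (real m - 1/2)) r =
    (-1) ^ m * (1/2) ^ (2 * m) * (pi / (1 - r\<^sup>2)) *
    (\<Sum>j = 0..2 * m - 2. (-1) ^ j * real ((2 * m - 2) choose j) *
       real (n + 3 - 2 * m + 2 * j) *
       (real (n + 4 - 2 * m + 2 * j) * chebU (n + 1 - 2 * m + 2 * j) r
        - real (n + 2 - 2 * m + 2 * j) * chebU (n + 3 - 2 * m + 2 * j) r))"
proof -
  define k where "k j = n + 1 - 2 * m + 2 * j" for j
  have k: "k j = n + 1 - 2 * m + 2 * j" "k j + 1 = n + 2 - 2 * m + 2 * j"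
    "k j + 2 = n + 3 - 2 * m + 2 * j" "k j + 3 = n + 4 - 2 * m + 2 * j" for j
    using assms(2) by (auto simp: k_def)
  have "hfp 3 (\<lambda>s. chebU n s * (1 - s\<^sup>2) powr (real m - 1/2)) r
      = - pi / (4 * (1 - r\<^sup>2)) * (\<Sum>j\<in>{0..2 * m - 2}.
          (-1) ^ j * real ((2 * m - 2) choose j) / (-4) ^ (m - 1) * real (k j + 2)
          * (real (k j + 3) * chebU (k j) r - real (k j + 1) * chebU (k j + 2) r))"
  proof (rule hfp3_sum_sin_mult_arccos[OF assms(3) finite_atLeastAtMost])
    fix s :: real assume "s \<in> {-1..1}"
    with assms(1,2) show "chebU n s * (1 - s\<^sup>2) powr (real m - 1/2) = (\<Sum>j\<in>{0..2 * m - 2}.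
        (-1) ^ j * real ((2 * m - 2) choose j) / (-4) ^ (m - 1) * sin (real (k j + 2) * arccos s))"
      unfolding k(3) by (intro chebU_mult_powr_expansion) auto
  qed
  also have "\<dots> = (-1) ^ m * (1/2) ^ (2 * m) * (pi / (1 - r\<^sup>2)) * (\<Sum>j\<in>{0..2 * m - 2}.
      (-1) ^ j * real ((2 * m - 2) choose j) * real (k j + 2)
      * (real (k j + 3) * chebU (k j) r - real (k j + 1) * chebU (k j + 2) r))"
  proof -
    have "1 \<le> m" using assms(1) by simp
    have scale: "- pi / (4 * R) * (\<Sum>j\<in>J. x j / K * y j * z j)
        = - 1 / (4 * K) * (pi / R) * (\<Sum>j\<in>J. x j * y j * z j)"
      for R K :: real and J :: "nat set" and x y z :: "nat \<Rightarrow> real"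
      unfolding sum_distrib_left by (rule sum.cong) (simp_all add: field_simps)
    show ?thesis
      unfolding minus_one_power_mult_half_power[OF \<open>1 \<le> m\<close>] by (rule scale)
  qed
  finally show ?thesis
    unfolding k[symmetric] .
qed

end
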